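(* Let $L, n, C, F$ be positive integers with $C \le L$. Let $x = (x^{(1)}, \ldots, x^{(L)})$ with each $x^{(\ell)} = (x^{(\ell)}_1,\dots,x^{(\ell)}_n) \in \mathbb{R}^n$, and let $y \in \mathbb{R}^{L \times L \times 2n}$ be its self-Cartesian product, defined by $y_{i,j,k} = x^{(i)}_k$ if $1 \le k \le n$ and $y_{i,j,k} = x^{(j)}_{k-n}$ if $n+1 \le k \le 2n$. Let $\mathbf{W} \in \mathbb{R}^{C \times C \times 2n \times F}$ be a symmetry generating kernel, i.e. $\mathbf{W}_{i,j,k,f} = \mathbf{W}_{j,i,k,f}$ for all $i,j \in \{1,\dots,C\}$, $k \in \{1,\dots,2n\}$, $f\in\{1,\dots,F\}$, and $\mathbf{W}_{i,j,k,f} = \mathbf{W}_{i,j,n+k,f}$ for all $i,j$, all $f$, and all $k \le n$. Let $\mathbf{Z} = \mathbf{W} * y$ be the output of the convolutional layer with kernel $\mathbf{W}$ and input $y$, i.e. $$\mathbf{Z}_{s,t,f} = \sum_{k=1}^{2n} \sum_{i,j=1}^{C} \mathbf{W}_{i,j,k,f}\, y_{s+i,\,t+j,\,k}, \qquad s,t \in \{0,1,\dots,L-C\},\ f \in \{1,\dots,F\}.$$ Then $\mathbf{Z}$ is symmetric in the spatial dimensions: $\mathbf{Z}_{s,t,f} = \mathbf{Z}_{t,s,f}$ for all $s,t,f$.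
   Context: The convolution here is the standard (unbiased, stride one, no padding) cross-correlation used in convolutional neural networks, with $C$ the kernel size, $2n$ the number of input channels and $F$ the number of output channels. *)

theory Defs
  imports Complex_Main
begin

(* Self-Cartesian product: x l k is x^(l)_k (1-based); y i j k for 1 <= k <= 2n *)
definition self_cart :: "nat \<Rightarrow> (nat \<Rightarrow> nat \<Rightarrow> real) \<Rightarrow> nat \<Rightarrow> nat \<Rightarrow> nat \<Rightarrow> real" where
  "self_cart n x i j k = (if k \<le> n then x i k else x j (k - n))"

definition sym_gen_kernel :: "nat \<Rightarrow> nat \<Rightarrow> nat \<Rightarrow> (nat \<Rightarrow> nat \<Rightarrow> nat \<Rightarrow> nat \<Rightarrow> real) \<Rightarrow> bool" where
  "sym_gen_kernel C n F W \<longleftrightarrow>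
     (\<forall>i\<in>{1..C}. \<forall>j\<in>{1..C}. \<forall>k\<in>{1..2*n}. \<forall>f\<in>{1..F}. W i j k f = W j i k f) \<and>
     (\<forall>i\<in>{1..C}. \<forall>j\<in>{1..C}. \<forall>k\<in>{1..n}. \<forall>f\<in>{1..F}. W i j k f = W i j (n + k) f)"

definition conv_layer :: "nat \<Rightarrow> nat \<Rightarrow> (nat \<Rightarrow> nat \<Rightarrow> nat \<Rightarrow> nat \<Rightarrow> real) \<Rightarrow> (nat \<Rightarrow> nat \<Rightarrow> nat \<Rightarrow> real) \<Rightarrow> nat \<Rightarrow> nat \<Rightarrow> nat \<Rightarrow> real" where
  "conv_layer C m W y s t f = (\<Sum>k=1..m. \<Sum>i=1..C. \<Sum>j=1..C. W i j k f * y (s + i) (t + j) k)"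

end

theory Submission
  imports Defs
begin

(* Pair input channel k with channel n + k.  On y = self_cart n x, channel k at (s, t) reads
   only x^(s+i) and channel n + k reads only x^(t+j); the two kernel symmetries turn both
   contributions into the same one-dimensional convolution (marginal_conv), evaluated at s
   and at t.  So each channel pair contributes a term symmetric in s and t. *)

lemma sum_atLeastAtMost_double:
  fixes g :: "nat \<Rightarrow> 'a::comm_monoid_add"
  shows "(\<Sum>k=1..2*n. g k) = (\<Sum>k=1..n. g k + g (n + k))"
proof -
  have "{1..2*n} = {1..n} \<union> {n+1..2*n}" by auto
  then have "(\<Sum>k=1..2*n. g k) = (\<Sum>k=1..n. g k) + (\<Sum>k=n+1..2*n. g k)"
    by (simp add: sum.union_disjoint)
  also have "(\<Sum>k=n+1..2*n. g k) = (\<Sum>k=1..n. g (n + k))"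
    using sum.shift_bounds_cl_nat_ivl[of g 1 n n] by (simp add: mult_2 add.commute)
  finally show ?thesis by (simp add: sum.distrib)
qed

definition marginal_conv ::
    "nat \<Rightarrow> (nat \<Rightarrow> nat \<Rightarrow> nat \<Rightarrow> nat \<Rightarrow> real) \<Rightarrow> (nat \<Rightarrow> nat \<Rightarrow> real) \<Rightarrow> nat \<Rightarrow> nat \<Rightarrow> nat \<Rightarrow> real"
  where "marginal_conv C W x u k f = (\<Sum>i=1..C. \<Sum>j=1..C. W i j k f * x (u + i) k)"

lemma self_cart_channel_low:
  assumes "k \<le> n"
  shows "(\<Sum>i=1..C. \<Sum>j=1..C. W i j k f * self_cart n x (s + i) (t + j) k)
           = marginal_conv C W x s k f"
  using assms by (simp add: self_cart_def marginal_conv_def)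

lemma self_cart_channel_high:
  assumes "0 < k" and "\<And>i j. i \<in> {1..C} \<Longrightarrow> j \<in> {1..C} \<Longrightarrow> W i j (n + k) f = W j i k f"
  shows "(\<Sum>i=1..C. \<Sum>j=1..C. W i j (n + k) f * self_cart n x (s + i) (t + j) (n + k))
           = marginal_conv C W x t k f"
proof -
  have "(\<Sum>i=1..C. \<Sum>j=1..C. W i j (n + k) f * self_cart n x (s + i) (t + j) (n + k))
          = (\<Sum>i=1..C. \<Sum>j=1..C. W j i k f * x (t + j) k)"
    using assms by (intro sum.cong refl) (simp add: self_cart_def)
  also have "\<dots> = marginal_conv C W x t k f"
    unfolding marginal_conv_def by (rule sum.swap)
  finally show ?thesis .
qed

lemma conv_layer_self_cart:
  assumes "sym_gen_kernel C n F W" and "f \<in> {1..F}"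
  shows "conv_layer C (2*n) W (self_cart n x) s t f
           = (\<Sum>k=1..n. marginal_conv C W x s k f + marginal_conv C W x t k f)"
  unfolding conv_layer_def sum_atLeastAtMost_double
proof (intro sum.cong refl)
  fix k assume k: "k \<in> {1..n}"
  have W_swap: "W i j (n + k) f = W j i k f" if "i \<in> {1..C}" "j \<in> {1..C}" for i j
    using assms k that unfolding sym_gen_kernel_def by auto
  from k show "(\<Sum>i=1..C. \<Sum>j=1..C. W i j k f * self_cart n x (s + i) (t + j) k)
      + (\<Sum>i=1..C. \<Sum>j=1..C. W i j (n + k) f * self_cart n x (s + i) (t + j) (n + k))
      = marginal_conv C W x s k f + marginal_conv C W x t k f"
    using self_cart_channel_low[of k n] self_cart_channel_high[of k C W n f, OF _ W_swap]
    by simp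
qed

theorem theorem1:
  fixes L n C F :: nat
    and x :: "nat \<Rightarrow> nat \<Rightarrow> real"
    and W :: "nat \<Rightarrow> nat \<Rightarrow> nat \<Rightarrow> nat \<Rightarrow> real"
  assumes "0 < L" "0 < n" "0 < C" "0 < F" "C \<le> L"
    and "sym_gen_kernel C n F W"
  shows "\<forall>s\<in>{0..L-C}. \<forall>t\<in>{0..L-C}. \<forall>f\<in>{1..F}.
           conv_layer C (2*n) W (self_cart n x) s t f = conv_layer C (2*n) W (self_cart n x) t s f"
  using conv_layer_self_cart[OF assms(6)] by (simp add: add.commute)

end
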